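(* Let $\kappa$ be an infinite cardinal. The set $B=\{(A,\,A\cap C,\,C): A,C\in\mathcal{F}(\kappa),\ A\sim C\}$ is a bounded Boolean sublattice of $S$.
   Context: $\mathcal{F}(\kappa)$ is the Boolean lattice of subsets $X\subseteq\kappa$ that are finite or cofinite. For $A,C\in\mathcal{F}(\kappa)$, $A\sim C$ means that either both $A,C$ are finite or both $\kappa\setminus A,\kappa\setminus C$ are finite. Let $\mu(A,B,C)=(A\cap B)\cup(A\cap C)\cup(B\cap C)$; a triple is balanced if $A\cap B=A\cap C=B\cap C$. $S$ is the set of balanced triples $(A,B,C)\in\mathcal{F}(\kappa)^3$ with $C\setminus\mu(A,B,C)$ finite, ordered componentwise; it is a bounded lattice with componentwise meet, join $(A,B,C)\vee(A',B',C')=(U_1\cup m,U_2\cup m,U_3\cup m)$ where $U_1=A\cup A'$, $U_2=B\cup B'$, $U_3=C\cup C'$, $m=\mu(U_1,U_2,U_3)$, and bounds $(\emptyset,\emptyset,\emptyset)$, $(\kappa,\kappa,\kappa)$. *)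

theory Defs
  imports Main
begin

text \<open>The infinite cardinal kappa is modelled by an infinite type 'a (its universe).
  Triples are elements of 'a set \<times> 'a set \<times> 'a set.\<close>

definition FC :: "'a set set" where
  "FC = {X. finite X \<or> finite (- X)}"

definition simeq :: "'a set \<Rightarrow> 'a set \<Rightarrow> bool" where
  "simeq A C \<longleftrightarrow> (finite A \<and> finite C) \<or> (finite (- A) \<and> finite (- C))"

definition med :: "'a set \<Rightarrow> 'a set \<Rightarrow> 'a set \<Rightarrow> 'a set" where
  "med A B C = (A \<inter> B) \<union> (A \<inter> C) \<union> (B \<inter> C)"

definition balanced :: "'a set \<Rightarrow> 'a set \<Rightarrow> 'a set \<Rightarrow> bool" where
  "balanced A B C \<longleftrightarrow> A \<inter> B = A \<inter> C \<and> A \<inter> C = B \<inter> C"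

definition Sset :: "('a set \<times> 'a set \<times> 'a set) set" where
  "Sset = {(A, B, C). A \<in> FC \<and> B \<in> FC \<and> C \<in> FC \<and> balanced A B C
                      \<and> finite (C - med A B C)}"

definition meetS :: "'a set \<times> 'a set \<times> 'a set \<Rightarrow> 'a set \<times> 'a set \<times> 'a set \<Rightarrow> 'a set \<times> 'a set \<times> 'a set" where
  "meetS x y = (case x of (A, B, C) \<Rightarrow> case y of (A', B', C') \<Rightarrow>
                  (A \<inter> A', B \<inter> B', C \<inter> C'))"

definition joinS :: "'a set \<times> 'a set \<times> 'a set \<Rightarrow> 'a set \<times> 'a set \<times> 'a set \<Rightarrow> 'a set \<times> 'a set \<times> 'a set" where
  "joinS x y = (case x of (A, B, C) \<Rightarrow> case y of (A', B', C') \<Rightarrow>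
                  (let U1 = A \<union> A'; U2 = B \<union> B'; U3 = C \<union> C'; m = med U1 U2 U3
                   in (U1 \<union> m, U2 \<union> m, U3 \<union> m)))"

definition botS :: "'a set \<times> 'a set \<times> 'a set" where
  "botS = ({}, {}, {})"

definition topS :: "'a set \<times> 'a set \<times> 'a set" where
  "topS = (UNIV, UNIV, UNIV)"

definition Bset :: "('a set \<times> 'a set \<times> 'a set) set" where
  "Bset = {(A, A \<inter> C, C) | A C. A \<in> FC \<and> C \<in> FC \<and> simeq A C}"

end

theory Submission
  imports Defs
begin

text \<open>A triple (A, A \<inter> C, C) is balanced with median A \<inter> C, and since A \<sim> C the set
  C - A is finite, so B lies in S. On such triples the join of S is computed
  componentwise, because the median of (A \<union> A', (A \<union> A') \<inter> (C \<union> C'), C \<union> C') is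
  already the middle component. Hence B, with the componentwise operations, is
  isomorphic to the Boolean algebra of pairs (A, C) with A \<sim> C, which is closed
  under union, intersection and complement.\<close>

lemma FC_Int: "A \<in> FC \<Longrightarrow> B \<in> FC \<Longrightarrow> A \<inter> B \<in> FC"
  unfolding FC_def by (auto simp: Compl_Int)

lemma FC_Un: "A \<in> FC \<Longrightarrow> B \<in> FC \<Longrightarrow> A \<union> B \<in> FC"
  unfolding FC_def by auto

lemma FC_Compl: "A \<in> FC \<Longrightarrow> - A \<in> FC"
  unfolding FC_def by auto

lemma simeq_Int: "simeq A C \<Longrightarrow> simeq A' C' \<Longrightarrow> simeq (A \<inter> A') (C \<inter> C')"
  unfolding simeq_def by (auto simp: Compl_Int)

lemma simeq_Un: "simeq A C \<Longrightarrow> simeq A' C' \<Longrightarrow> simeq (A \<union> A') (C \<union> C')"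
  unfolding simeq_def by auto

lemma simeq_Compl: "simeq A C \<Longrightarrow> simeq (- A) (- C)"
  unfolding simeq_def by auto

lemma simeq_finite_Diff: "simeq A C \<Longrightarrow> finite (C - A)"
  unfolding simeq_def Diff_eq by (metis finite_Int inf_commute)

lemma Bset_iff:
  "x \<in> Bset \<longleftrightarrow> (\<exists>A C. x = (A, A \<inter> C, C) \<and> A \<in> FC \<and> C \<in> FC \<and> simeq A C)"
  unfolding Bset_def by auto

lemma meetS_Bset_triples:
  "meetS (A, A \<inter> C, C) (A', A' \<inter> C', C') = (A \<inter> A', (A \<inter> A') \<inter> (C \<inter> C'), C \<inter> C')"
  unfolding meetS_def by auto

lemma joinS_Bset_triples:
  "joinS (A, A \<inter> C, C) (A', A' \<inter> C', C') = (A \<union> A', (A \<union> A') \<inter> (C \<union> C'), C \<union> C')"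
  unfolding joinS_def med_def Let_def by auto

lemma Bset_subset_Sset: "Bset \<subseteq> Sset"
proof
  fix x assume "x \<in> Bset"
  then obtain A C where x: "x = (A, A \<inter> C, C)" "A \<in> FC" "C \<in> FC" "simeq A C"
    by (auto simp: Bset_iff)
  have "med A (A \<inter> C) C = A \<inter> C"
    unfolding med_def by auto
  then have "C - med A (A \<inter> C) C = C - A"
    by auto
  then show "x \<in> Sset"
    using x simeq_finite_Diff[OF x(4)] FC_Int unfolding Sset_def balanced_def by auto
qed

lemma botS_in_Bset: "botS \<in> Bset"
  unfolding Bset_iff botS_def by (auto simp: FC_def simeq_def)

lemma topS_in_Bset: "topS \<in> Bset"
  unfolding Bset_iff topS_def by (rule exI[of _ UNIV], rule exI[of _ UNIV]) (auto simp: FC_def simeq_def)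

lemma meetS_in_Bset: "x \<in> Bset \<Longrightarrow> y \<in> Bset \<Longrightarrow> meetS x y \<in> Bset"
  unfolding Bset_iff by (auto simp: meetS_Bset_triples FC_Int simeq_Int)

lemma joinS_in_Bset: "x \<in> Bset \<Longrightarrow> y \<in> Bset \<Longrightarrow> joinS x y \<in> Bset"
  unfolding Bset_iff by (auto simp: joinS_Bset_triples FC_Un simeq_Un)

lemma Bset_meetS_joinS_distrib:
  assumes "x \<in> Bset" "y \<in> Bset" "z \<in> Bset"
  shows "meetS x (joinS y z) = joinS (meetS x y) (meetS x z)"
proof -
  obtain A C A' C' A'' C'' where
    xyz: "x = (A, A \<inter> C, C)" "y = (A', A' \<inter> C', C')" "z = (A'', A'' \<inter> C'', C'')"
    using assms unfolding Bset_iff by blast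
  show ?thesis
    unfolding xyz meetS_Bset_triples joinS_Bset_triples by (simp add: Int_Un_distrib Int_ac)
qed

lemma Bset_complement:
  assumes "x \<in> Bset"
  shows "\<exists>y\<in>Bset. meetS x y = botS \<and> joinS x y = topS"
proof -
  obtain A C where x: "x = (A, A \<inter> C, C)" "A \<in> FC" "C \<in> FC" "simeq A C"
    using assms by (auto simp: Bset_iff)
  have "(- A, - A \<inter> - C, - C) \<in> Bset"
    unfolding Bset_iff using x by (blast intro: FC_Compl simeq_Compl)
  moreover have "meetS x (- A, - A \<inter> - C, - C) = botS"
    unfolding x(1) meetS_Bset_triples botS_def by auto
  moreover have "joinS x (- A, - A \<inter> - C, - C) = topS"
    unfolding x(1) joinS_Bset_triples topS_def by auto
  ultimately show ?thesis by blast
qed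

theorem lemma5p3:
  fixes Bk :: "('k set \<times> 'k set \<times> 'k set) set"
  assumes "infinite (UNIV :: 'k set)"
    and "Bk = Bset"
  shows "Bk \<subseteq> Sset
    \<and> botS \<in> Bk \<and> topS \<in> Bk
    \<and> (\<forall>x\<in>Bk. \<forall>y\<in>Bk. meetS x y \<in> Bk \<and> joinS x y \<in> Bk)
    \<and> (\<forall>x\<in>Bk. \<forall>y\<in>Bk. \<forall>z\<in>Bk.
          meetS x (joinS y z) = joinS (meetS x y) (meetS x z))
    \<and> (\<forall>x\<in>Bk. \<exists>y\<in>Bk. meetS x y = botS \<and> joinS x y = topS)"
  unfolding assms(2)
  by (intro conjI ballI Bset_subset_Sset botS_in_Bset topS_in_Bset meetS_in_Bset joinS_in_Bset
      Bset_meetS_joinS_distrib Bset_complement)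

end
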